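(* Let $\alpha>1$ and let $u_0:[0,\infty)\to[0,\infty)$ be of class $C^1$ and non-decreasing, with $m_0(\rho)=\int_0^\rho u_0(\sigma)\,d\sigma$. For $t\ge 0$ define $P_t(\rho_0)=\rho_0+\alpha\, m_0(\rho_0)\,u_0(\rho_0)^{\alpha-1}\,t$. Then for every $t\ge0$ the map $P_t:[0,\infty)\to[0,\infty)$ is a bijection with $\frac{dP_t}{d\rho_0}\ge 1$, and the function $$u(t,\rho)=\begin{cases}\big(u_0(P_t^{-1}(\rho))^{-\alpha}+\alpha t\big)^{-1/\alpha}, & u_0(P_t^{-1}(\rho))\neq 0,\\ 0,& u_0(P_t^{-1}(\rho))=0,\end{cases}$$ is continuous and $C^1$, and $m(t,\rho)=\int_0^\rho u(t,\sigma)\,d\sigma$ is a global classical ($C^1$) solution of the mass equation $m_t+m\,(m_\rho)^\alpha=0$ on $(0,\infty)\times(0,\infty)$ with $m(0,\cdot)=m_0$ and $m(t,0)=0$.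
   Context: Radially symmetric densities $u(t,x)\ge0$ on $\mathbb R^d$ are written as functions of a volume variable $\rho\ge0$ (proportional to $|x|^d$), and the mass function is $m(t,\rho)=\int_0^\rho u(t,\sigma)\,d\sigma$, so $u=m_\rho$. The "mass equation" associated with $u_t=\nabla\cdot(u^\alpha\nabla v)$, $-\Delta v=u$, is $m_t+m\,(m_\rho)^\alpha=0$. A classical solution is a $C^1$ function satisfying this equation pointwise. *)

theory Defs
  imports "HOL-Analysis.Analysis"
begin

definition mass0 :: "(real \<Rightarrow> real) \<Rightarrow> real \<Rightarrow> real" where
  "mass0 u0 \<rho> = integral {0..\<rho>} u0"

definition Pmap :: "real \<Rightarrow> (real \<Rightarrow> real) \<Rightarrow> real \<Rightarrow> real \<Rightarrow> real" where
  "Pmap \<alpha> u0 t \<rho>0 = \<rho>0 + \<alpha> * mass0 u0 \<rho>0 * (u0 \<rho>0) powr (\<alpha> - 1) * t"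

definition usol :: "real \<Rightarrow> (real \<Rightarrow> real) \<Rightarrow> real \<Rightarrow> real \<Rightarrow> real" where
  "usol \<alpha> u0 t \<rho> =
     (let r = u0 (the_inv_into {0..} (Pmap \<alpha> u0 t) \<rho>)
      in if r \<noteq> 0 then (r powr (- \<alpha>) + \<alpha> * t) powr (- 1 / \<alpha>) else 0)"

definition msol :: "real \<Rightarrow> (real \<Rightarrow> real) \<Rightarrow> real \<times> real \<Rightarrow> real" where
  "msol \<alpha> u0 z = integral {0..snd z} (usol \<alpha> u0 (fst z))"

definition C1_on :: "(real \<times> real) set \<Rightarrow> (real \<times> real \<Rightarrow> real) \<Rightarrow> bool" where
  "C1_on S f \<longleftrightarrow> (\<exists>ft fr. continuous_on S ft \<and> continuous_on S fr \<and>
     (\<forall>z\<in>S. (f has_derivative (\<lambda>(h, k). h * ft z + k * fr z)) (at z within S)))"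

definition classical_mass_solution :: "real \<Rightarrow> (real \<times> real) set \<Rightarrow> (real \<times> real \<Rightarrow> real) \<Rightarrow> bool" where
  "classical_mass_solution \<alpha> S m \<longleftrightarrow> (\<exists>mt mr. continuous_on S mt \<and> continuous_on S mr \<and>
     (\<forall>z\<in>S. (m has_derivative (\<lambda>(h, k). h * mt z + k * mr z)) (at z) \<and>
            mt z + m z * (mr z) powr \<alpha> = 0))"

end

theory Submission
  imports Defs
begin

text \<open>Along characteristics the mass equation reduces to the ODEs
  \<open>\<rho>' = \<alpha> m u^(\<alpha>-1)\<close>, \<open>u' = - u^(\<alpha>+1)\<close>, \<open>m' = (\<alpha>-1) m u^\<alpha>\<close>. Started at
  \<open>(x, m0 x, u0 x)\<close> they give the straight lines \<open>\<rho> = P_t x\<close>, \<open>u = u0 x W^(-1/\<alpha>)\<close> and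
  \<open>m = m0 x W^((\<alpha>-1)/\<alpha>)\<close> with \<open>W = 1 + \<alpha> t u0 x^\<alpha>\<close>. Since \<open>u0\<close> is non-decreasing, so is
  \<open>\<phi> = \<alpha> m0 u0^(\<alpha>-1)\<close>, hence \<open>P_t = id + t \<phi>\<close> has \<open>P_t' \<ge> 1\<close> and is a bijection of
  \<open>[0, \<infinity>)\<close> whose inverse \<open>x(t, \<rho>)\<close> is continuous, and \<open>C\<^sup>1\<close> for \<open>t, \<rho> > 0\<close> by the inverse
  function theorem. Substituting \<open>x(t, \<rho>)\<close> into the formula for \<open>m\<close> gives a \<open>C\<^sup>1\<close> function with
  \<open>m_\<rho> = u\<close> and \<open>m_t = - m u^\<alpha>\<close>; both reduce to the identity
  \<open>u0 P_t' = u0 W + (\<alpha>-1) t m0 (u0^\<alpha>)'\<close>. As \<open>m(t, 0) = 0\<close>, this \<open>m\<close> is the integral of \<open>u\<close>.\<close>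

lemma has_field_derivative_mult_zero:
  fixes f g :: "real \<Rightarrow> real"
  assumes f: "(f has_field_derivative f') (at x within S)" and fx: "f x = 0"
    and g: "continuous (at x within S) g"
  shows "((\<lambda>y. f y * g y) has_field_derivative f' * g x) (at x within S)"
proof -
  have "((\<lambda>y. (f y - f x) / (y - x)) \<longlongrightarrow> f') (at x within S)"
    using f by (simp add: has_field_derivative_iff)
  moreover have "(g \<longlongrightarrow> g x) (at x within S)" using g by (simp add: continuous_within)
  ultimately have "((\<lambda>y. (f y - f x) / (y - x) * g y) \<longlongrightarrow> f' * g x) (at x within S)"
    by (rule tendsto_mult)
  then show ?thesis using fx by (simp add: has_field_derivative_iff)
qed

lemma mono_on_has_real_derivative_nonneg:
  fixes f :: "real \<Rightarrow> real"
  assumes f: "(f has_real_derivative D) (at x within {a..})" and x: "x \<ge> a"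
    and mono: "mono_on {a..} f"
  shows "D \<ge> 0"
proof -
  have "((\<lambda>y. (f y - f x) / (y - x)) \<longlongrightarrow> D) (at x within {a..})"
    using f by (simp add: has_field_derivative_iff)
  then have "((\<lambda>y. (f y - f x) / (y - x)) \<longlongrightarrow> D) (at x within {x<..})"
    by (rule tendsto_within_subset) (use x in auto)
  moreover have "eventually (\<lambda>y. (f y - f x) / (y - x) \<ge> 0) (at x within {x<..})"
    unfolding eventually_at_filter
    using mono x by (auto intro!: always_eventually divide_nonneg_pos simp: mono_on_def)
  ultimately show ?thesis
    by (intro tendsto_lowerbound) auto
qed

lemma mult_powr_self: "(s::real) \<ge> 0 \<Longrightarrow> s * s powr b = s powr (b + 1)"
  by (cases "s = 0") (auto simp: powr_add)

lemma powr_minus_add_eq: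
  fixes r t a :: real
  assumes r: "r > 0" and t: "t \<ge> 0" and a: "a > 0"
  shows "(r powr (- a) + a * t) powr (- 1 / a) = r * (1 + a * t * r powr a) powr (- 1 / a)"
proof -
  have "r powr (- a) + a * t = r powr (- a) * (1 + a * t * r powr a)"
    using r by (simp add: algebra_simps powr_add[symmetric])
  then have "(r powr (- a) + a * t) powr (- 1 / a)
      = (r powr (- a)) powr (- 1 / a) * (1 + a * t * r powr a) powr (- 1 / a)"
    using t a by (simp add: powr_mult)
  also have "(r powr (- a)) powr (- 1 / a) = r"
    using a r by (simp add: powr_powr)
  finally show ?thesis .
qed

definition has_continuous_partials ::
    "(real \<times> real) set \<Rightarrow> (real \<times> real \<Rightarrow> real) \<Rightarrow> (real \<times> real \<Rightarrow> real) \<Rightarrow> (real \<times> real \<Rightarrow> real) \<Rightarrow> bool"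
  where "has_continuous_partials U f ft fr \<longleftrightarrow> continuous_on U ft \<and> continuous_on U fr \<and>
    (\<forall>z\<in>U. (f has_derivative (\<lambda>(h, k). h * ft z + k * fr z)) (at z))"

lemma has_continuous_partials_continuous_on:
  "has_continuous_partials U f ft fr \<Longrightarrow> continuous_on U f"
  unfolding has_continuous_partials_def
  by (meson continuous_at_imp_continuous_on has_derivative_continuous)

lemma has_continuous_partials_cong:
  assumes "has_continuous_partials U f ft fr"
    and "\<And>z. z \<in> U \<Longrightarrow> ft z = ft' z" "\<And>z. z \<in> U \<Longrightarrow> fr z = fr' z"
  shows "has_continuous_partials U f ft' fr'"
  using assms unfolding has_continuous_partials_def by (simp cong: continuous_on_cong)

lemma has_continuous_partials_transform:
  assumes "has_continuous_partials U f ft fr" "open U" "\<And>z. z \<in> U \<Longrightarrow> f z = g z"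
  shows "has_continuous_partials U g ft fr"
  using assms unfolding has_continuous_partials_def
  by (auto intro: has_derivative_transform_within_open)

lemma has_continuous_partials_const: "has_continuous_partials U (\<lambda>_. c) (\<lambda>_. 0) (\<lambda>_. 0)"
  unfolding has_continuous_partials_def
  by (auto intro!: has_derivative_eq_rhs[OF has_derivative_const])

lemma has_continuous_partials_fst: "has_continuous_partials U fst (\<lambda>_. 1) (\<lambda>_. 0)"
  unfolding has_continuous_partials_def
  by (auto intro!: has_derivative_eq_rhs[OF has_derivative_fst[OF has_derivative_ident]])

lemma has_continuous_partials_add:
  assumes "has_continuous_partials U f ft fr" "has_continuous_partials U g gt gr"
  shows "has_continuous_partials U (\<lambda>z. f z + g z) (\<lambda>z. ft z + gt z) (\<lambda>z. fr z + gr z)"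
  using assms unfolding has_continuous_partials_def
  by (auto intro!: continuous_intros has_derivative_eq_rhs[OF has_derivative_add] simp: algebra_simps)

lemma has_continuous_partials_mult:
  assumes f: "has_continuous_partials U f ft fr" and g: "has_continuous_partials U g gt gr"
  shows "has_continuous_partials U (\<lambda>z. f z * g z)
    (\<lambda>z. ft z * g z + f z * gt z) (\<lambda>z. fr z * g z + f z * gr z)"
  using assms has_continuous_partials_continuous_on[OF f] has_continuous_partials_continuous_on[OF g]
  unfolding has_continuous_partials_def
  by (auto intro!: continuous_intros has_derivative_eq_rhs[OF has_derivative_mult] simp: algebra_simps)

lemma has_continuous_partials_compose:
  assumes f: "has_continuous_partials U f ft fr"
    and g: "\<And>z. z \<in> U \<Longrightarrow> (g has_real_derivative g' (f z)) (at (f z))"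
    and g': "continuous_on (f ` U) g'"
  shows "has_continuous_partials U (\<lambda>z. g (f z)) (\<lambda>z. g' (f z) * ft z) (\<lambda>z. g' (f z) * fr z)"
proof -
  have "continuous_on U (\<lambda>z. g' (f z))"
    using continuous_on_compose[OF has_continuous_partials_continuous_on[OF f] g'] by (simp add: o_def)
  moreover have "((\<lambda>z. g (f z)) has_derivative (\<lambda>(h, k). h * (g' (f z) * ft z) + k * (g' (f z) * fr z))) (at z)"
    if "z \<in> U" for z
  proof -
    have "(f has_derivative (\<lambda>(h, k). h * ft z + k * fr z)) (at z)"
      using f that by (simp add: has_continuous_partials_def)
    from has_derivative_compose[OF this g[OF that, unfolded has_field_derivative_def]]
    show ?thesis by (rule has_derivative_eq_rhs) (auto simp: algebra_simps)
  qed
  ultimately show ?thesis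
    using f unfolding has_continuous_partials_def by (auto intro!: continuous_intros)
qed

lemma has_continuous_partials_powr:
  assumes f: "has_continuous_partials U f ft fr" and pos: "\<And>z. z \<in> U \<Longrightarrow> f z > 0"
  shows "has_continuous_partials U (\<lambda>z. f z powr c)
    (\<lambda>z. c * f z powr (c - 1) * ft z) (\<lambda>z. c * f z powr (c - 1) * fr z)"
proof -
  have "continuous_on (f ` U) (\<lambda>x. c * x powr (c - 1))"
    using pos by (auto intro!: continuous_intros dest: less_imp_neq[symmetric])
  then show ?thesis
    using has_continuous_partials_compose[OF f, of "\<lambda>x. x powr c" "\<lambda>x. c * x powr (c - 1)"] pos
    by (auto intro: has_real_derivative_powr)
qed

lemma has_continuous_partials_section:
  assumes "has_continuous_partials U f ft fr" "(t, r) \<in> U"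
  shows "((\<lambda>r. f (t, r)) has_real_derivative fr (t, r)) (at r)"
  using assms unfolding has_continuous_partials_def has_field_derivative_def
  by (auto intro!: has_derivative_eq_rhs[OF has_derivative_compose[of "\<lambda>r. (t, r)" "\<lambda>h. (0, h)"]]
      derivative_eq_intros)

lemma C1_on_has_continuous_partials:
  assumes "has_continuous_partials U f ft fr" "open U"
  shows "C1_on U f"
  using assms at_within_open[of _ U] unfolding has_continuous_partials_def C1_on_def by auto

abbreviation quadrant :: "(real \<times> real) set" where "quadrant \<equiv> {0..} \<times> {0..}"
abbreviation open_quadrant :: "(real \<times> real) set" where "open_quadrant \<equiv> {0<..} \<times> {0<..}"

locale initial_profile =
  fixes \<alpha> :: real and u0 u0' :: "real \<Rightarrow> real"
  assumes alpha_gt_1: "\<alpha> > 1"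
    and u0'_continuous_on: "continuous_on {0..} u0'"
    and u0_has_derivative: "\<And>x. x \<ge> 0 \<Longrightarrow> (u0 has_real_derivative u0' x) (at x within {0..})"
    and u0_nonneg: "\<And>x. x \<ge> 0 \<Longrightarrow> u0 x \<ge> 0"
    and u0_mono: "mono_on {0..} u0"
begin

abbreviation m0 where "m0 \<equiv> mass0 u0"

lemma u0_continuous_on: "continuous_on {0..} u0"
  unfolding continuous_on_eq_continuous_within
  using u0_has_derivative DERIV_continuous by blast

lemma u0_has_derivative_at: "x > 0 \<Longrightarrow> (u0 has_real_derivative u0' x) (at x)"
  using u0_has_derivative[of x] at_within_interior[of x "{0..}"] by simp

lemma u0'_nonneg: "x \<ge> 0 \<Longrightarrow> u0' x \<ge> 0"
  using mono_on_has_real_derivative_nonneg u0_has_derivative u0_mono by blast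

lemma u0_le: "0 \<le> x \<Longrightarrow> x \<le> y \<Longrightarrow> u0 x \<le> u0 y"
  using u0_mono by (auto simp: mono_on_def)

lemma u0_eq_0_below: "u0 x = 0 \<Longrightarrow> 0 \<le> y \<Longrightarrow> y \<le> x \<Longrightarrow> u0 y = 0"
  using u0_le[of y x] u0_nonneg[of y] by auto

lemma u0_integrable: "a \<ge> 0 \<Longrightarrow> u0 integrable_on {a..b}"
  by (auto intro!: integrable_continuous_interval continuous_on_subset[OF u0_continuous_on])

lemma m0_has_derivative: "x \<ge> 0 \<Longrightarrow> (m0 has_real_derivative u0 x) (at x within {0..})"
proof -
  assume x: "x \<ge> 0"
  have "continuous_on {0..x+1} u0"
    by (rule continuous_on_subset[OF u0_continuous_on]) auto
  then have "((\<lambda>u. integral {0..u} u0) has_vector_derivative u0 x) (at x within {0..x+1})"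
    by (rule integral_has_vector_derivative) (use x in auto)
  moreover have "at x within {0..x+1} = at x within {0..}"
    by (rule at_within_nhd[of _ "{..<x+1}"]) auto
  ultimately show ?thesis
    by (simp add: has_real_derivative_iff_has_vector_derivative mass0_def[abs_def])
qed

lemma m0_has_derivative_at: "x > 0 \<Longrightarrow> (m0 has_real_derivative u0 x) (at x)"
  using m0_has_derivative[of x] at_within_interior[of x "{0..}"] by simp

lemma m0_continuous_on: "continuous_on {0..} m0"
  unfolding continuous_on_eq_continuous_within
  using m0_has_derivative DERIV_continuous by blast

lemma m0_0 [simp]: "m0 0 = 0"
  by (simp add: mass0_def)

lemma m0_nonneg: "x \<ge> 0 \<Longrightarrow> m0 x \<ge> 0"
  unfolding mass0_def by (rule integral_nonneg[OF u0_integrable]) (auto intro: u0_nonneg)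

lemma m0_le: "0 \<le> x \<Longrightarrow> x \<le> y \<Longrightarrow> m0 x \<le> m0 y"
  unfolding mass0_def by (rule integral_subset_le) (auto intro: u0_nonneg u0_integrable)

lemma m0_le_dist_mult_u0:
  assumes "u0 x = 0" "0 \<le> x" "0 \<le> y"
  shows "m0 y \<le> \<bar>y - x\<bar> * u0 y"
proof (cases "y \<le> x")
  case True
  have "m0 y = integral {0..y} (\<lambda>_. 0::real)"
    unfolding mass0_def by (rule integral_cong) (use assms True u0_eq_0_below in auto)
  then show ?thesis using assms u0_nonneg[of y] by simp
next
  case False
  have "m0 y = integral {0..x} u0 + integral {x..y} u0"
    unfolding mass0_def
    by (rule Henstock_Kurzweil_Integration.integral_combine[symmetric])
      (use assms False u0_integrable in auto)
  also have "integral {0..x} u0 = integral {0..x} (\<lambda>_. 0::real)"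
    by (rule integral_cong) (use assms u0_eq_0_below in auto)
  also have "integral {x..y} u0 \<le> integral {x..y} (\<lambda>_. u0 y)"
    by (rule integral_le) (use assms False u0_integrable u0_le in auto)
  finally show ?thesis using False by simp
qed

lemma m0_eq_0: "u0 x = 0 \<Longrightarrow> 0 \<le> x \<Longrightarrow> m0 x = 0"
  using m0_le_dist_mult_u0[of x x] m0_nonneg[of x] by auto

lemma u0_powr_continuous_on: "c > 0 \<Longrightarrow> continuous_on {0..} (\<lambda>y. u0 y powr c)"
  by (rule continuous_on_powr'[OF u0_continuous_on continuous_on_const]) (use u0_nonneg in auto)

definition "phi x = \<alpha> * m0 x * u0 x powr (\<alpha> - 1)"
definition "phi' x = \<alpha> * (u0 x powr \<alpha> + (\<alpha> - 1) * m0 x * u0 x powr (\<alpha> - 2) * u0' x)"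
definition "psi x = u0 x powr \<alpha>"
definition "psi' x = \<alpha> * u0 x powr (\<alpha> - 1) * u0' x"

lemma phi_has_derivative: "x \<ge> 0 \<Longrightarrow> (phi has_real_derivative phi' x) (at x within {0..})"
proof (cases "u0 x = 0")
  case True
  assume x: "x \<ge> 0"
  have "continuous (at x within {0..}) (\<lambda>y. u0 y powr (\<alpha> - 1))"
    using u0_powr_continuous_on[of "\<alpha> - 1"] alpha_gt_1 x
    by (simp add: continuous_on_eq_continuous_within)
  from has_field_derivative_mult_zero[OF DERIV_cmult[OF m0_has_derivative[OF x]] _ this]
  show ?thesis using True m0_eq_0[OF True x] by (simp add: phi_def[abs_def] phi'_def)
next
  case False
  assume x: "x \<ge> 0"
  then have pos: "u0 x > 0" using False u0_nonneg[OF x] by simp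
  have "(phi has_real_derivative \<alpha> * u0 x * u0 x powr (\<alpha> - 1) +
      (\<alpha> - 1) * u0 x powr (\<alpha> - 1 - 1) * u0' x * (\<alpha> * m0 x)) (at x within {0..})"
    unfolding phi_def[abs_def]
    by (rule DERIV_mult[OF DERIV_cmult[OF m0_has_derivative[OF x]]
          DERIV_chain2[OF has_real_derivative_powr[OF pos] u0_has_derivative[OF x]]])
  moreover have "u0 x * u0 x powr (\<alpha> - 1) = u0 x powr \<alpha>"
    using mult_powr_self[of "u0 x" "\<alpha> - 1"] pos by simp
  ultimately show ?thesis
    by (simp add: phi'_def algebra_simps)
qed

lemma psi_has_derivative: "x \<ge> 0 \<Longrightarrow> (psi has_real_derivative psi' x) (at x within {0..})"
proof (cases "u0 x = 0")
  case True
  assume x: "x \<ge> 0"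
  have "continuous (at x within {0..}) (\<lambda>y. u0 y powr (\<alpha> - 1))"
    using u0_powr_continuous_on[of "\<alpha> - 1"] alpha_gt_1 x
    by (simp add: continuous_on_eq_continuous_within)
  from has_field_derivative_mult_zero[OF u0_has_derivative[OF x] True this]
  have "((\<lambda>y. u0 y * u0 y powr (\<alpha> - 1)) has_real_derivative 0) (at x within {0..})"
    by (simp add: True)
  moreover have "u0 y * u0 y powr (\<alpha> - 1) = psi y" if "y \<in> {0..}" for y
    using mult_powr_self[of "u0 y" "\<alpha> - 1"] u0_nonneg that by (simp add: psi_def)
  ultimately show ?thesis
    using has_field_derivative_transform_within[OF _ zero_less_one, of _ 0 x "{0..}" psi] x
    by (simp add: psi'_def True)
next
  case False
  assume x: "x \<ge> 0"
  then have pos: "u0 x > 0" using False u0_nonneg[OF x] by simp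
  show ?thesis unfolding psi_def[abs_def] psi'_def
    by (rule DERIV_cong[OF DERIV_chain2[OF has_real_derivative_powr[OF pos] u0_has_derivative[OF x]]])
      simp
qed

lemma psi_has_derivative_at: "x > 0 \<Longrightarrow> (psi has_real_derivative psi' x) (at x)"
  using psi_has_derivative[of x] at_within_interior[of x "{0..}"] by simp

lemma phi_continuous_on: "continuous_on {0..} phi"
  unfolding continuous_on_eq_continuous_within
  using phi_has_derivative DERIV_continuous by blast

lemma psi_continuous_on: "continuous_on {0..} psi"
  unfolding continuous_on_eq_continuous_within
  using psi_has_derivative DERIV_continuous by blast

lemma psi'_continuous_on: "continuous_on {0..} psi'"
  unfolding psi'_def[abs_def] using alpha_gt_1
  by (intro continuous_intros u0_powr_continuous_on u0'_continuous_on) auto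

text \<open>For \<open>\<alpha> < 2\<close> the factor \<open>u0 powr (\<alpha> - 2)\<close> blows up where \<open>u0\<close> vanishes; there
  \<open>m0 y \<le> \<bar>y - x\<bar> * u0 y\<close> trades one power of \<open>u0\<close> for the vanishing factor \<open>\<bar>y - x\<bar>\<close>.\<close>

lemma m0_u0_powr_u0'_continuous_on:
  "continuous_on {0..} (\<lambda>y. m0 y * u0 y powr (\<alpha> - 2) * u0' y)"
  unfolding continuous_on_def
proof
  fix x :: real assume x: "x \<in> {0..}"
  let ?F = "at x within {0..}"
  have u0_lim: "(u0 \<longlongrightarrow> u0 x) ?F" using u0_continuous_on x by (simp add: continuous_on_def)
  have m0_lim: "(m0 \<longlongrightarrow> m0 x) ?F" using m0_continuous_on x by (simp add: continuous_on_def)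
  have u0'_lim: "(u0' \<longlongrightarrow> u0' x) ?F" using u0'_continuous_on x by (simp add: continuous_on_def)
  show "((\<lambda>y. m0 y * u0 y powr (\<alpha> - 2) * u0' y) \<longlongrightarrow> m0 x * u0 x powr (\<alpha> - 2) * u0' x) ?F"
  proof (cases "u0 x = 0")
    case False
    show ?thesis
      by (intro tendsto_mult m0_lim u0'_lim tendsto_powr[OF u0_lim tendsto_const False])
  next
    case True
    have "((\<lambda>y. u0 y powr (\<alpha> - 1)) \<longlongrightarrow> u0 x powr (\<alpha> - 1)) ?F"
      using u0_powr_continuous_on[of "\<alpha> - 1"] alpha_gt_1 x by (simp add: continuous_on_def)
    then have "((\<lambda>y. \<bar>y - x\<bar> * u0 y powr (\<alpha> - 1) * u0' y) \<longlongrightarrow> \<bar>x - x\<bar> * 0 * u0' x) ?F"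
      using True by (intro tendsto_intros u0'_lim) auto
    then have bound_lim: "((\<lambda>y. \<bar>y - x\<bar> * u0 y powr (\<alpha> - 1) * u0' y) \<longlongrightarrow> 0) ?F"
      by simp
    have "norm (m0 y * u0 y powr (\<alpha> - 2) * u0' y) \<le> \<bar>y - x\<bar> * u0 y powr (\<alpha> - 1) * u0' y"
      if y: "y \<in> {0..}" for y
    proof -
      have "m0 y * u0 y powr (\<alpha> - 2) \<le> (\<bar>y - x\<bar> * u0 y) * u0 y powr (\<alpha> - 2)"
        using m0_le_dist_mult_u0[OF True] x y by (intro mult_right_mono) auto
      also have "\<dots> = \<bar>y - x\<bar> * u0 y powr (\<alpha> - 1)"
        using mult_powr_self[of "u0 y" "\<alpha> - 2"] u0_nonneg y by (simp add: algebra_simps)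
      finally show ?thesis
        using y m0_nonneg u0'_nonneg by (simp add: abs_mult mult_right_mono)
    qed
    then have "eventually (\<lambda>y. norm (m0 y * u0 y powr (\<alpha> - 2) * u0' y)
        \<le> \<bar>y - x\<bar> * u0 y powr (\<alpha> - 1) * u0' y) ?F"
      by (auto simp: eventually_at_filter)
    from Lim_null_comparison[OF this bound_lim] show ?thesis
      using True by simp
  qed
qed

lemma phi'_continuous_on: "continuous_on {0..} phi'"
proof -
  have "continuous_on {0..}
      (\<lambda>x. \<alpha> * (u0 x powr \<alpha> + (\<alpha> - 1) * (m0 x * u0 x powr (\<alpha> - 2) * u0' x)))"
    using alpha_gt_1
    by (intro continuous_intros u0_powr_continuous_on m0_u0_powr_u0'_continuous_on) auto
  then show ?thesis by (simp add: phi'_def[abs_def] mult.assoc)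
qed

lemma phi_nonneg: "x \<ge> 0 \<Longrightarrow> phi x \<ge> 0"
  using alpha_gt_1 m0_nonneg by (simp add: phi_def)

lemma phi_le: "0 \<le> x \<Longrightarrow> x \<le> y \<Longrightarrow> phi x \<le> phi y"
  unfolding phi_def using alpha_gt_1
  by (intro mult_mono mult_left_mono m0_le powr_mono2 u0_le)
    (auto intro!: u0_nonneg m0_nonneg mult_nonneg_nonneg)

lemma phi'_nonneg: "x \<ge> 0 \<Longrightarrow> phi' x \<ge> 0"
  using alpha_gt_1 m0_nonneg u0'_nonneg by (simp add: phi'_def)

lemma psi_nonneg: "psi x \<ge> 0"
  by (simp add: psi_def)

lemma u0_mult_phi: "x \<ge> 0 \<Longrightarrow> u0 x * phi x = \<alpha> * m0 x * psi x"
  using mult_powr_self[of "u0 x" "\<alpha> - 1"] u0_nonneg[of x] by (simp add: phi_def psi_def)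

lemma u0_mult_Pmap_deriv:
  "x \<ge> 0 \<Longrightarrow> u0 x * (1 + t * phi' x) = u0 x * (1 + \<alpha> * t * psi x) + (\<alpha> - 1) * t * m0 x * psi' x"
proof -
  assume "x \<ge> 0"
  then have "u0 x powr \<alpha> = u0 x * u0 x powr (\<alpha> - 1)"
    and "u0 x powr (\<alpha> - 1) = u0 x * u0 x powr (\<alpha> - 2)"
    using mult_powr_self[of "u0 x"] u0_nonneg by simp_all
  then show ?thesis
    unfolding phi'_def psi_def psi'_def by (simp only:) (simp add: algebra_simps)
qed

lemma Pmap_eq: "Pmap \<alpha> u0 t x = x + t * phi x"
  by (simp add: Pmap_def phi_def)

lemma Pmap_0 [simp]: "Pmap \<alpha> u0 t 0 = 0"
  by (simp add: Pmap_def)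

lemma Pmap_ge: "t \<ge> 0 \<Longrightarrow> 0 \<le> x \<Longrightarrow> Pmap \<alpha> u0 t x \<ge> x"
  unfolding Pmap_eq using phi_nonneg[of x] by simp

lemma Pmap_strict_mono: "t \<ge> 0 \<Longrightarrow> strict_mono_on {0..} (Pmap \<alpha> u0 t)"
proof (intro strict_mono_onI)
  fix x y :: real assume "t \<ge> 0" "x \<in> {0..}" "x < y"
  then have "t * phi x \<le> t * phi y"
    by (intro mult_left_mono phi_le) auto
  then show "Pmap \<alpha> u0 t x < Pmap \<alpha> u0 t y"
    using \<open>x < y\<close> by (simp add: Pmap_eq)
qed

lemma Pmap_continuous_on: "continuous_on {0..} (Pmap \<alpha> u0 t)"
  unfolding Pmap_eq[abs_def] using phi_continuous_on by (intro continuous_intros) auto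

lemma Pmap_bij: assumes t: "t \<ge> 0" shows "bij_betw (Pmap \<alpha> u0 t) {0..} {0..}"
  unfolding bij_betw_def
proof (intro conjI equalityI subsetI)
  show "inj_on (Pmap \<alpha> u0 t) {0..}"
    by (rule strict_mono_on_imp_inj_on[OF Pmap_strict_mono[OF t]])
  show "y \<in> {0..}" if "y \<in> Pmap \<alpha> u0 t ` {0..}" for y
    using that Pmap_ge[OF t] by force
  show "y \<in> Pmap \<alpha> u0 t ` {0..}" if y: "y \<in> {0..}" for y
  proof -
    have "\<exists>x\<ge>0. x \<le> y \<and> Pmap \<alpha> u0 t x = y"
      using y Pmap_ge[OF t, of y] continuous_on_subset[OF Pmap_continuous_on]
      by (intro IVT') auto
    then show ?thesis by force
  qed
qed

lemma Pmap_has_derivative: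
  "x \<ge> 0 \<Longrightarrow> (Pmap \<alpha> u0 t has_real_derivative 1 + t * phi' x) (at x within {0..})"
  using phi_has_derivative[of x] unfolding Pmap_eq[abs_def] by (auto intro!: derivative_eq_intros)

definition "Pinv z = the_inv_into {0..} (Pmap \<alpha> u0 (fst z)) (snd z)"

lemma Pinv_nonneg: assumes "z \<in> quadrant" shows "Pinv z \<ge> 0"
proof -
  have "bij_betw (Pmap \<alpha> u0 (fst z)) {0..} {0..}"
    using assms by (intro Pmap_bij) auto
  then have "the_inv_into {0..} (Pmap \<alpha> u0 (fst z)) (snd z) \<in> {0..}"
    using assms by (intro the_inv_into_into) (auto simp: bij_betw_def)
  then show ?thesis by (simp add: Pinv_def)
qed

lemma Pmap_Pinv: assumes "z \<in> quadrant" shows "Pmap \<alpha> u0 (fst z) (Pinv z) = snd z"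
proof -
  have "bij_betw (Pmap \<alpha> u0 (fst z)) {0..} {0..}"
    using assms by (intro Pmap_bij) auto
  then show ?thesis
    unfolding Pinv_def using assms by (intro f_the_inv_into_f) (auto simp: bij_betw_def)
qed

lemma Pinv_Pmap: assumes "t \<ge> 0" "x \<ge> 0" shows "Pinv (t, Pmap \<alpha> u0 t x) = x"
  unfolding Pinv_def using assms Pmap_bij[of t]
  by (simp add: bij_betw_def the_inv_into_f_f)

lemma Pinv_time_0: "\<rho> \<ge> 0 \<Longrightarrow> Pinv (0, \<rho>) = \<rho>"
  using Pinv_Pmap[of 0 \<rho>] by (simp add: Pmap_eq)

lemma Pinv_origin: "t \<ge> 0 \<Longrightarrow> Pinv (t, 0) = 0"
  using Pinv_Pmap[of t 0] by simp

lemma Pinv_pos: assumes "t \<ge> 0" "\<rho> > 0" shows "Pinv (t, \<rho>) > 0"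
  using Pmap_Pinv[of "(t, \<rho>)"] Pinv_nonneg[of "(t, \<rho>)"] assms
  by (cases "Pinv (t, \<rho>) = 0") auto

text \<open>Monotonicity of \<open>phi\<close> makes \<open>Pinv\<close> Lipschitz in \<open>\<rho>\<close>, with a modulus in \<open>t\<close>
  controlled by \<open>phi \<rho>'\<close> since \<open>Pinv (t', \<rho>') \<le> \<rho>'\<close>.\<close>

lemma Pinv_dist_le:
  assumes z: "(t, \<rho>) \<in> quadrant" and z': "(t', \<rho>') \<in> quadrant"
  shows "\<bar>Pinv (t', \<rho>') - Pinv (t, \<rho>)\<bar> \<le> \<bar>\<rho>' - \<rho>\<bar> + \<bar>t' - t\<bar> * phi \<rho>'"
proof -
  define x where "x = Pinv (t, \<rho>)"
  define x' where "x' = Pinv (t', \<rho>')"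
  have x: "x \<ge> 0" "x + t * phi x = \<rho>"
    using Pinv_nonneg[OF z] Pmap_Pinv[OF z] by (auto simp: x_def Pmap_eq)
  have x': "x' \<ge> 0" "x' + t' * phi x' = \<rho>'"
    using Pinv_nonneg[OF z'] Pmap_Pinv[OF z'] by (auto simp: x'_def Pmap_eq)
  then have "x' \<le> \<rho>'"
    using phi_nonneg[of x'] z' by auto
  have "\<bar>x' - x\<bar> \<le> \<bar>(x' - x) + t * (phi x' - phi x)\<bar>"
  proof (cases "x \<le> x'")
    case True
    then have "t * (phi x' - phi x) \<ge> 0" using phi_le[OF x(1) True] z by simp
    then show ?thesis using True by linarith
  next
    case False
    then have "t * (phi x' - phi x) \<le> 0" using phi_le[OF x'(1), of x] z
      by (simp add: mult_nonneg_nonpos)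
    then show ?thesis using False by linarith
  qed
  also have "(x' - x) + t * (phi x' - phi x) = (\<rho>' - \<rho>) - (t' - t) * phi x'"
    using x x' by (simp add: algebra_simps)
  also have "\<bar>\<dots>\<bar> \<le> \<bar>\<rho>' - \<rho>\<bar> + \<bar>t' - t\<bar> * phi x'"
    using phi_nonneg[OF x'(1)] abs_triangle_ineq4[of "\<rho>' - \<rho>" "(t' - t) * phi x'"]
    by (simp add: abs_mult)
  also have "\<dots> \<le> \<bar>\<rho>' - \<rho>\<bar> + \<bar>t' - t\<bar> * phi \<rho>'"
    using phi_le[OF x'(1) \<open>x' \<le> \<rho>'\<close>] by (simp add: mult_left_mono)
  finally show ?thesis by (simp add: x_def x'_def)
qed

lemma Pinv_continuous_on: "continuous_on quadrant Pinv"
  unfolding continuous_on_def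
proof
  fix z assume z: "z \<in> quadrant"
  define bound where "bound w = \<bar>snd w - snd z\<bar> + \<bar>fst w - fst z\<bar> * phi (snd w)" for w
  have "continuous_on quadrant (\<lambda>w. phi (snd w))"
    by (rule continuous_on_compose2[OF phi_continuous_on continuous_on_snd]) auto
  then have "continuous_on quadrant bound"
    unfolding bound_def by (intro continuous_intros)
  then have "(bound \<longlongrightarrow> bound z) (at z within quadrant)"
    using z unfolding continuous_on_def by blast
  then have "(bound \<longlongrightarrow> 0) (at z within quadrant)"
    by (simp add: bound_def)
  moreover have "eventually (\<lambda>w. norm (Pinv w - Pinv z) \<le> bound w) (at z within quadrant)"
    unfolding eventually_at_filter
  proof (intro always_eventually allI impI)
    fix w assume "w \<in> quadrant"
    then show "norm (Pinv w - Pinv z) \<le> bound w"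
      using Pinv_dist_le[of "fst z" "snd z" "fst w" "snd w"] z by (simp add: bound_def mem_Times_iff)
  qed
  ultimately have "((\<lambda>w. Pinv w - Pinv z) \<longlongrightarrow> 0) (at z within quadrant)"
    by (rule Lim_null_comparison[rotated])
  then show "(Pinv \<longlongrightarrow> Pinv z) (at z within quadrant)"
    by (simp add: LIM_zero_iff)
qed

lemma continuous_on_compose_Pinv:
  "continuous_on {0..} f \<Longrightarrow> continuous_on quadrant (\<lambda>z. f (Pinv z))"
  using continuous_on_compose2[OF _ Pinv_continuous_on] Pinv_nonneg by auto

definition "Pjac z = 1 + fst z * phi' (Pinv z)"

lemma Pjac_ge_1: "z \<in> quadrant \<Longrightarrow> Pjac z \<ge> 1"
  unfolding Pjac_def using phi'_nonneg[OF Pinv_nonneg] by auto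

text \<open>Inverse function theorem for \<open>(t, x) \<mapsto> (t, Pmap \<alpha> u0 t x)\<close>, whose inverse is
  \<open>(t, \<rho>) \<mapsto> (t, Pinv (t, \<rho>))\<close>.\<close>

lemma Pinv_has_derivative:
  assumes t: "t > 0" and \<rho>: "\<rho> > 0"
  shows "(Pinv has_derivative (\<lambda>(h, k). h * (- phi (Pinv (t, \<rho>)) / Pjac (t, \<rho>)) + k * (1 / Pjac (t, \<rho>))))
    (at (t, \<rho>))"
proof -
  define x where "x = Pinv (t, \<rho>)"
  define D where "D = Pjac (t, \<rho>)"
  have x: "x > 0" using Pinv_pos[of t \<rho>] t \<rho> by (simp add: x_def)
  have D: "D = 1 + t * phi' x" "D \<ge> 1"
    using Pjac_ge_1[of "(t, \<rho>)"] t \<rho> by (auto simp: D_def Pjac_def x_def)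
  define F where "F = (\<lambda>w::real \<times> real. (fst w, snd w + fst w * phi (snd w)))"
  define F' where "F' = (\<lambda>w::real \<times> real. (fst w, snd w + (fst w * phi x + t * (phi' x * snd w))))"
  define g where "g = (\<lambda>w::real \<times> real. (fst w, Pinv w))"
  define g' where "g' = (\<lambda>w::real \<times> real. (fst w, (snd w - fst w * phi x) / D))"
  have "(phi has_real_derivative phi' x) (at x)"
    using phi_has_derivative[of x] at_within_interior[of x "{0..}"] x by simp
  moreover have "(snd has_derivative snd) (at (t, x))"
    using has_derivative_snd[OF has_derivative_ident, of "at (t, x)"] by simp
  ultimately have "((\<lambda>w. phi (snd w)) has_derivative (\<lambda>w. phi' x * snd w)) (at (t, x))"
    using has_derivative_compose[of snd snd "(t, x)" UNIV phi "(*) (phi' x)"]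
    by (simp add: has_field_derivative_def)
  then have "(F has_derivative F') (at (t, x))"
    unfolding F_def F'_def
    by (auto intro!: derivative_eq_intros simp: algebra_simps fun_eq_iff)
  then have dF: "(F has_derivative F') (at (g (t, \<rho>)))"
    by (simp add: g_def x_def)
  have "linear g'"
    unfolding g'_def by (rule linearI) (auto simp: algebra_simps add_divide_distrib diff_divide_distrib)
  then have lin: "bounded_linear g'"
    by (simp add: linear_conv_bounded_linear)
  have inv: "g' \<circ> F' = id"
    using D by (auto simp: g'_def F'_def fun_eq_iff field_simps)
  have "continuous_on open_quadrant Pinv"
    by (rule continuous_on_subset[OF Pinv_continuous_on]) auto
  then have "isCont Pinv (t, \<rho>)"
    using t \<rho> by (simp add: continuous_on_eq_continuous_at open_Times)
  then have cont: "continuous (at (t, \<rho>)) g"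
    unfolding g_def by (intro continuous_intros)
  have left_inv: "F (g z) = z" if "z \<in> open_quadrant" for z
    using Pmap_Pinv[of z] that by (auto simp: F_def g_def Pmap_eq)
  have "(g has_derivative g') (at (t, \<rho>))"
    by (rule has_derivative_inverse_basic[OF dF lin inv cont _ _ left_inv])
      (use t \<rho> in \<open>auto simp: open_Times\<close>)
  from has_derivative_snd[OF this]
  have "(Pinv has_derivative (\<lambda>w. snd (g' w))) (at (t, \<rho>))"
    by (simp add: g_def)
  moreover have "(\<lambda>w. snd (g' w)) = (\<lambda>(h, k). h * (- phi x / D) + k * (1 / D))"
    using D(2) by (auto simp: g'_def fun_eq_iff field_simps)
  ultimately show ?thesis
    by (simp add: x_def D_def)
qed

lemma Pinv_has_continuous_partials:
  "has_continuous_partials open_quadrant Pinv (\<lambda>z. - phi (Pinv z) / Pjac z) (\<lambda>z. 1 / Pjac z)"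
proof -
  have Pjac_cont: "continuous_on quadrant Pjac"
    unfolding Pjac_def[abs_def] by (intro continuous_intros continuous_on_compose_Pinv phi'_continuous_on)
  have Pjac_nz: "\<forall>z\<in>quadrant. Pjac z \<noteq> 0"
    using Pjac_ge_1 by force
  have sub: "open_quadrant \<subseteq> quadrant"
    by auto
  have "continuous_on open_quadrant (\<lambda>z. - phi (Pinv z) / Pjac z)"
    by (rule continuous_on_subset[OF _ sub])
      (intro continuous_intros continuous_on_compose_Pinv phi_continuous_on Pjac_cont Pjac_nz)
  moreover have "continuous_on open_quadrant (\<lambda>z. 1 / Pjac z)"
    by (rule continuous_on_subset[OF _ sub]) (intro continuous_intros Pjac_cont Pjac_nz)
  moreover have "(Pinv has_derivative (\<lambda>(h, k). h * (- phi (Pinv z) / Pjac z) + k * (1 / Pjac z))) (at z)"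
    if "z \<in> open_quadrant" for z
    using that Pinv_has_derivative[of "fst z" "snd z"] by auto
  ultimately show ?thesis
    unfolding has_continuous_partials_def by blast
qed

lemma has_continuous_partials_compose_Pinv:
  assumes "\<And>x. x > 0 \<Longrightarrow> (f has_real_derivative f' x) (at x)" "continuous_on {0..} f'"
  shows "has_continuous_partials open_quadrant (\<lambda>z. f (Pinv z))
    (\<lambda>z. f' (Pinv z) * (- phi (Pinv z) / Pjac z)) (\<lambda>z. f' (Pinv z) * (1 / Pjac z))"
proof (rule has_continuous_partials_compose[OF Pinv_has_continuous_partials])
  have "Pinv ` open_quadrant \<subseteq> {0..}"
    using Pinv_pos by (force simp: less_imp_le)
  then show "continuous_on (Pinv ` open_quadrant) f'"
    by (rule continuous_on_subset[OF assms(2)])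
  show "(f has_real_derivative f' (Pinv z)) (at (Pinv z))" if "z \<in> open_quadrant" for z
    using that Pinv_pos[of "fst z" "snd z"] assms(1) by (auto simp: mem_Times_iff)
qed

definition "W z = 1 + \<alpha> * fst z * psi (Pinv z)"
definition "u_char z = u0 (Pinv z) * W z powr (- 1 / \<alpha>)"
definition "m_char z = m0 (Pinv z) * W z powr ((\<alpha> - 1) / \<alpha>)"

lemma W_ge_1: "z \<in> quadrant \<Longrightarrow> W z \<ge> 1"
  unfolding W_def using alpha_gt_1 psi_nonneg by auto

lemma W_continuous_on: "continuous_on quadrant W"
  unfolding W_def[abs_def]
  by (intro continuous_intros continuous_on_compose_Pinv psi_continuous_on)

lemma W_powr_continuous_on: "continuous_on quadrant (\<lambda>z. W z powr c)"
  using W_ge_1 by (intro continuous_on_powr' W_continuous_on continuous_on_const) force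

lemma u_char_continuous_on: "continuous_on quadrant u_char"
  unfolding u_char_def[abs_def]
  by (intro continuous_intros continuous_on_compose_Pinv u0_continuous_on W_powr_continuous_on)

lemma m_char_continuous_on: "continuous_on quadrant m_char"
  unfolding m_char_def[abs_def]
  by (intro continuous_intros continuous_on_compose_Pinv m0_continuous_on W_powr_continuous_on)

lemma W_has_continuous_partials:
  "has_continuous_partials open_quadrant W
    (\<lambda>z. \<alpha> * (psi (Pinv z) - fst z * psi' (Pinv z) * phi (Pinv z) / Pjac z))
    (\<lambda>z. \<alpha> * fst z * psi' (Pinv z) / Pjac z)"
proof -
  from has_continuous_partials_add[OF has_continuous_partials_const
      has_continuous_partials_mult[OF has_continuous_partials_mult[OF
        has_continuous_partials_const has_continuous_partials_fst]
        has_continuous_partials_compose_Pinv[OF psi_has_derivative_at psi'_continuous_on]]]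
  show ?thesis unfolding W_def[abs_def]
    by (rule has_continuous_partials_cong) (simp_all add: algebra_simps)
qed

lemma W_pos: "z \<in> open_quadrant \<Longrightarrow> W z > 0"
  using W_ge_1[of z] by force

lemma u_char_has_continuous_partials: "\<exists>ut ur. has_continuous_partials open_quadrant u_char ut ur"
  using has_continuous_partials_mult[OF
      has_continuous_partials_compose_Pinv[OF u0_has_derivative_at u0'_continuous_on]
      has_continuous_partials_powr[OF W_has_continuous_partials W_pos]]
  unfolding u_char_def[abs_def] by blast

lemma W_powr_eq:
  assumes "z \<in> quadrant"
  shows "W z powr ((\<alpha> - 1) / \<alpha>) = W z * W z powr (- 1 / \<alpha>)"
    and "W z powr ((\<alpha> - 1) / \<alpha> - 1) = W z powr (- 1 / \<alpha>)"
proof -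
  have exps: "(\<alpha> - 1) / \<alpha> = 1 + - 1 / \<alpha>" "(\<alpha> - 1) / \<alpha> - 1 = - 1 / \<alpha>"
    using alpha_gt_1 by (simp_all add: field_simps)
  have "W z powr (1 + - 1 / \<alpha>) = W z * W z powr (- 1 / \<alpha>)"
    using W_ge_1[OF assms] powr_add[of "W z" 1 "- 1 / \<alpha>"] by simp
  then show "W z powr ((\<alpha> - 1) / \<alpha>) = W z * W z powr (- 1 / \<alpha>)"
    by (simp only: exps(1))
  show "W z powr ((\<alpha> - 1) / \<alpha> - 1) = W z powr (- 1 / \<alpha>)"
    by (simp only: exps(2))
qed

lemma u_char_powr_alpha:
  assumes z: "z \<in> quadrant" shows "u_char z powr \<alpha> = psi (Pinv z) / W z"
proof -
  have "u_char z powr \<alpha> = u0 (Pinv z) powr \<alpha> * (W z powr (- 1 / \<alpha>)) powr \<alpha>"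
    using u0_nonneg[OF Pinv_nonneg[OF z]] by (simp add: u_char_def powr_mult)
  also have "(W z powr (- 1 / \<alpha>)) powr \<alpha> = W z powr (- 1)"
    using alpha_gt_1 by (simp add: powr_powr)
  also have "W z powr (- 1) = 1 / W z"
    using W_ge_1[OF z] by (simp add: powr_minus_divide)
  finally show ?thesis
    by (simp add: psi_def)
qed

text \<open>The left-hand sides below are the partials of \<open>m_char\<close> as delivered by the product and
  chain rules; \<open>u0_mult_Pmap_deriv\<close> collapses them.\<close>

lemma m_char_rho_partial_eq:
  assumes z: "z \<in> quadrant"
  shows "u0 (Pinv z) * (1 / Pjac z) * W z powr ((\<alpha> - 1) / \<alpha>) +
      m0 (Pinv z) * ((\<alpha> - 1) / \<alpha> * W z powr ((\<alpha> - 1) / \<alpha> - 1) *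
        (\<alpha> * fst z * psi' (Pinv z) / Pjac z))
    = u_char z"
proof -
  have "Pjac z \<noteq> 0" using Pjac_ge_1[OF z] by simp
  moreover have "u0 (Pinv z) * Pjac z = u0 (Pinv z) * W z + (\<alpha> - 1) * fst z * m0 (Pinv z) * psi' (Pinv z)"
    using u0_mult_Pmap_deriv[OF Pinv_nonneg[OF z], of "fst z"] by (simp add: Pjac_def W_def)
  ultimately show ?thesis
    using alpha_gt_1 unfolding W_powr_eq[OF z] u_char_def
    by (simp add: field_simps) algebra
qed

lemma m_char_time_partial_eq:
  assumes z: "z \<in> quadrant"
  shows "u0 (Pinv z) * (- phi (Pinv z) / Pjac z) * W z powr ((\<alpha> - 1) / \<alpha>) +
      m0 (Pinv z) * ((\<alpha> - 1) / \<alpha> * W z powr ((\<alpha> - 1) / \<alpha> - 1) *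
        (\<alpha> * (psi (Pinv z) - fst z * psi' (Pinv z) * phi (Pinv z) / Pjac z)))
    = - (m_char z * u_char z powr \<alpha>)"
proof -
  have "Pjac z \<noteq> 0" "W z \<noteq> 0" using Pjac_ge_1[OF z] W_ge_1[OF z] by simp_all
  moreover have "u0 (Pinv z) * Pjac z = u0 (Pinv z) * W z + (\<alpha> - 1) * fst z * m0 (Pinv z) * psi' (Pinv z)"
    using u0_mult_Pmap_deriv[OF Pinv_nonneg[OF z], of "fst z"] by (simp add: Pjac_def W_def)
  moreover have "u0 (Pinv z) * phi (Pinv z) = \<alpha> * m0 (Pinv z) * psi (Pinv z)"
    using u0_mult_phi[OF Pinv_nonneg[OF z]] .
  ultimately show ?thesis
    using alpha_gt_1 unfolding W_powr_eq[OF z] m_char_def u_char_powr_alpha[OF z]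
    by (simp add: field_simps) algebra
qed

lemma m_char_has_continuous_partials:
  "has_continuous_partials open_quadrant m_char (\<lambda>z. - (m_char z * u_char z powr \<alpha>)) u_char"
proof -
  have "has_continuous_partials open_quadrant m_char
      (\<lambda>z. u0 (Pinv z) * (- phi (Pinv z) / Pjac z) * W z powr ((\<alpha> - 1) / \<alpha>) +
        m0 (Pinv z) * ((\<alpha> - 1) / \<alpha> * W z powr ((\<alpha> - 1) / \<alpha> - 1) *
          (\<alpha> * (psi (Pinv z) - fst z * psi' (Pinv z) * phi (Pinv z) / Pjac z))))
      (\<lambda>z. u0 (Pinv z) * (1 / Pjac z) * W z powr ((\<alpha> - 1) / \<alpha>) +
        m0 (Pinv z) * ((\<alpha> - 1) / \<alpha> * W z powr ((\<alpha> - 1) / \<alpha> - 1) *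
          (\<alpha> * fst z * psi' (Pinv z) / Pjac z)))"
    using has_continuous_partials_mult[OF
        has_continuous_partials_compose_Pinv[OF m0_has_derivative_at u0_continuous_on]
        has_continuous_partials_powr[OF W_has_continuous_partials W_pos]]
    unfolding m_char_def[abs_def] .
  then show ?thesis
    apply (rule has_continuous_partials_cong)
     apply (rule m_char_time_partial_eq; force)
    apply (rule m_char_rho_partial_eq; force)
    done
qed

lemma usol_eq_u_char:
  assumes t: "t \<ge> 0" and \<rho>: "\<rho> \<ge> 0" shows "usol \<alpha> u0 t \<rho> = u_char (t, \<rho>)"
proof -
  define r where "r = u0 (Pinv (t, \<rho>))"
  have usol_r: "usol \<alpha> u0 t \<rho> = (if r \<noteq> 0 then (r powr (- \<alpha>) + \<alpha> * t) powr (- 1 / \<alpha>) else 0)"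
    by (simp add: usol_def r_def Pinv_def)
  show ?thesis
  proof (cases "r = 0")
    case True
    then show ?thesis by (simp add: usol_r u_char_def r_def)
  next
    case False
    then have "r > 0"
      using u0_nonneg[OF Pinv_nonneg, of "(t, \<rho>)"] t \<rho> by (simp add: r_def)
    then have "(r powr (- \<alpha>) + \<alpha> * t) powr (- 1 / \<alpha>) = r * (1 + \<alpha> * t * r powr \<alpha>) powr (- 1 / \<alpha>)"
      using alpha_gt_1 t by (intro powr_minus_add_eq) auto
    then show ?thesis
      using False by (simp add: usol_r u_char_def W_def psi_def r_def)
  qed
qed

lemma m_char_origin: "t \<ge> 0 \<Longrightarrow> m_char (t, 0) = 0"
  by (simp add: m_char_def Pinv_origin)

lemma msol_eq_m_char:
  assumes t: "t > 0" and \<rho>: "\<rho> \<ge> 0" shows "msol \<alpha> u0 (t, \<rho>) = m_char (t, \<rho>)"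
proof -
  have "continuous_on {0..\<rho>} (\<lambda>\<sigma>. m_char (t, \<sigma>))"
    using t by (intro continuous_on_compose2[OF m_char_continuous_on] continuous_intros) auto
  moreover have "((\<lambda>\<sigma>. m_char (t, \<sigma>)) has_vector_derivative usol \<alpha> u0 t \<sigma>) (at \<sigma>)"
    if "\<sigma> \<in> {0<..<\<rho>}" for \<sigma>
    using has_continuous_partials_section[OF m_char_has_continuous_partials, of t \<sigma>]
      usol_eq_u_char[of t \<sigma>] t that
    by (simp add: has_real_derivative_iff_has_vector_derivative)
  ultimately have "(usol \<alpha> u0 t has_integral m_char (t, \<rho>) - m_char (t, 0)) {0..\<rho>}"
    by (rule fundamental_theorem_of_calculus_interior[OF \<rho>])
  then show ?thesis
    using m_char_origin[of t] t by (simp add: msol_def integral_unique)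
qed

lemma usol_continuous_on: "continuous_on quadrant (\<lambda>(t, \<rho>). usol \<alpha> u0 t \<rho>)"
  using u_char_continuous_on
  by (rule continuous_on_cong[THEN iffD1, rotated 2]) (auto simp: usol_eq_u_char)

lemma usol_C1: "C1_on open_quadrant (\<lambda>(t, \<rho>). usol \<alpha> u0 t \<rho>)"
proof -
  obtain ut ur where "has_continuous_partials open_quadrant u_char ut ur"
    using u_char_has_continuous_partials by blast
  then have "has_continuous_partials open_quadrant (\<lambda>(t, \<rho>). usol \<alpha> u0 t \<rho>) ut ur"
    by (rule has_continuous_partials_transform) (auto simp: open_Times usol_eq_u_char)
  then show ?thesis
    by (rule C1_on_has_continuous_partials) (simp add: open_Times)
qed

lemma msol_classical_mass_solution: "classical_mass_solution \<alpha> open_quadrant (msol \<alpha> u0)"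
proof -
  have "has_continuous_partials open_quadrant (msol \<alpha> u0) (\<lambda>z. - (m_char z * u_char z powr \<alpha>)) u_char"
    by (rule has_continuous_partials_transform[OF m_char_has_continuous_partials])
      (auto simp: open_Times msol_eq_m_char)
  moreover have "- (m_char z * u_char z powr \<alpha>) + msol \<alpha> u0 z * u_char z powr \<alpha> = 0"
    if "z \<in> open_quadrant" for z
    using that msol_eq_m_char[of "fst z" "snd z"] by (auto simp: mem_Times_iff)
  ultimately show ?thesis
    unfolding classical_mass_solution_def has_continuous_partials_def by blast
qed

lemma msol_time_0: "\<rho> \<ge> 0 \<Longrightarrow> msol \<alpha> u0 (0, \<rho>) = mass0 u0 \<rho>"
  unfolding msol_def mass0_def fst_conv snd_conv
  by (rule integral_cong) (simp add: usol_eq_u_char u_char_def W_def Pinv_time_0)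

end

theorem mainTheorem1:
  fixes \<alpha> :: real and u0 :: "real \<Rightarrow> real"
  assumes alpha: "\<alpha> > 1"
    and u0_C1: "\<exists>u0'. continuous_on {0..} u0' \<and>
                  (\<forall>x\<ge>0. (u0 has_real_derivative u0' x) (at x within {0..}))"
    and u0_nonneg: "\<forall>x\<ge>0. u0 x \<ge> 0"
    and u0_mono: "mono_on {0..} u0"
  shows "(\<forall>t\<ge>0.
           bij_betw (Pmap \<alpha> u0 t) {0..} {0..} \<and>
           (\<forall>\<rho>0\<ge>0. \<exists>D. (Pmap \<alpha> u0 t has_real_derivative D) (at \<rho>0 within {0..}) \<and> D \<ge> 1)) \<and>
         continuous_on ({0..} \<times> {0..}) (\<lambda>(t, \<rho>). usol \<alpha> u0 t \<rho>) \<and>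
         C1_on ({0<..} \<times> {0<..}) (\<lambda>(t, \<rho>). usol \<alpha> u0 t \<rho>) \<and>
         classical_mass_solution \<alpha> ({0<..} \<times> {0<..}) (msol \<alpha> u0) \<and>
         (\<forall>\<rho>\<ge>0. msol \<alpha> u0 (0, \<rho>) = mass0 u0 \<rho>) \<and>
         (\<forall>t\<ge>0. msol \<alpha> u0 (t, 0) = 0)"
proof -
  obtain u0' where "continuous_on {0..} u0'"
    and "\<forall>x\<ge>0. (u0 has_real_derivative u0' x) (at x within {0..})"
    using u0_C1 by blast
  then interpret initial_profile \<alpha> u0 u0'
    using alpha u0_nonneg u0_mono by unfold_locales auto
  have "\<exists>D. (Pmap \<alpha> u0 t has_real_derivative D) (at \<rho>0 within {0..}) \<and> D \<ge> 1"
    if "t \<ge> 0" "\<rho>0 \<ge> 0" for t \<rho>0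
    using Pmap_has_derivative[of \<rho>0 t] phi'_nonneg[of \<rho>0] that by force
  then show ?thesis
    using Pmap_bij usol_continuous_on usol_C1 msol_classical_mass_solution msol_time_0
    by (simp add: msol_def)
qed

end
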